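(* Let $X$ be a compact metric space and $f:X\dashrightarrow X$ a continuous open-dense defined map which is good with respect to iterates. For every positive strong submeasure $\hat\mu$ on $\Gamma_{f,\infty}$, $$f_*(\pi_1)_*(\hat\mu)\ge(\pi_1)_*(\sigma_f)_*(\hat\mu).$$
   Context: Positive strong submeasures on a compact metric space $W$: sub-linear, bounded, non-decreasing maps $C^0(W)\to\mathbb{R}$; $\mu\le\nu$ means pointwise inequality on $C^0$. For a continuous map $g:W\to W'$ between compact metric spaces, $g_*(\mu)(\varphi)=\mu(\varphi\circ g)$. A continuous open-dense defined map $f:X\dashrightarrow X$ is a continuous map $f:\mathrm{OpenDom}(f)\to X$ with $\mathrm{OpenDom}(f)$ open dense, $I(f)=X\setminus\mathrm{OpenDom}(f)$; its pushforward is $f_*(\mu)(\varphi)=\inf\{\mu(\psi):\psi\in C^0(X),\psi\ge E(\varphi\circ f)\}$, where $E(\varphi\circ f)=\varphi\circ f$ on $\mathrm{OpenDom}(f)$ and $E(\varphi\circ f)(x)=\limsup_{y\in\mathrm{OpenDom}(f),y\to x}\varphi(f(y))$ otherwise. $\Omega_{f,\infty}=\{x\in\mathrm{OpenDom}(f):f^n(x)\notin I(f)\ \forall n\}$; $f$ is good with respect to iterates if $\Omega_{f,\infty}$ is dense and $X\setminus\Omega_{f,\infty}$ is nowhere dense. $\Gamma_{f,\infty}$ is the closure in $X^{\mathbb{N}}$ (product topology) of $\{(x,f(x),f^2(x),\ldots):x\in\Omega_{f,\infty}\}$, $\sigma_f$ is the shift map on it and $\pi_1:\Gamma_{f,\infty}\to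 X$ the first coordinate projection. *)

theory Defs
  imports "HOL-Analysis.Analysis"
begin

text \<open>Functions are total HOL functions; only their restriction to W matters
  (monotonicity is w.r.t. the pointwise order on W).\<close>
definition positive_strong_submeasure ::
  "'b::topological_space set \<Rightarrow> (('b \<Rightarrow> real) \<Rightarrow> real) \<Rightarrow> bool" where
  "positive_strong_submeasure W \<mu> \<longleftrightarrow>
     (\<forall>\<phi> \<psi>. continuous_on W \<phi> \<longrightarrow> continuous_on W \<psi> \<longrightarrow>
        \<mu> (\<lambda>x. \<phi> x + \<psi> x) \<le> \<mu> \<phi> + \<mu> \<psi>) \<and>
     (\<forall>\<phi> c. continuous_on W \<phi> \<longrightarrow> c \<ge> 0 \<longrightarrow> \<mu> (\<lambda>x. c * \<phi> x) = c * \<mu> \<phi>) \<and>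
     (\<forall>\<phi> \<psi>. continuous_on W \<phi> \<longrightarrow> continuous_on W \<psi> \<longrightarrow>
        (\<forall>x\<in>W. \<phi> x \<le> \<psi> x) \<longrightarrow> \<mu> \<phi> \<le> \<mu> \<psi>) \<and>
     (\<exists>C. \<forall>\<phi>. continuous_on W \<phi> \<longrightarrow> \<bar>\<mu> \<phi>\<bar> \<le> C * (SUP x\<in>W. \<bar>\<phi> x\<bar>)) \<and>
     (\<forall>\<phi>. continuous_on W \<phi> \<longrightarrow> (\<forall>x\<in>W. \<phi> x \<ge> 0) \<longrightarrow> \<mu> \<phi> \<ge> 0)"

definition push_cont :: "('b \<Rightarrow> 'c) \<Rightarrow> (('b \<Rightarrow> real) \<Rightarrow> real) \<Rightarrow> (('c \<Rightarrow> real) \<Rightarrow> real)" where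
  "push_cont g \<mu> = (\<lambda>\<phi>. \<mu> (\<phi> \<circ> g))"

text \<open>A continuous open-dense defined map f : X -\<rightarrow> X with OpenDom(f) = D.\<close>
definition open_dense_map :: "'a::metric_space set \<Rightarrow> 'a set \<Rightarrow> ('a \<Rightarrow> 'a) \<Rightarrow> bool" where
  "open_dense_map X D f \<longleftrightarrow> D \<subseteq> X \<and> openin (top_of_set X) D \<and> X \<subseteq> closure D \<and>
     continuous_on D f \<and> f ` D \<subseteq> X"

definition ext_comp :: "'a::topological_space set \<Rightarrow> ('a \<Rightarrow> 'a) \<Rightarrow> ('a \<Rightarrow> real) \<Rightarrow> 'a \<Rightarrow> ereal" where
  "ext_comp D f \<phi> x = (if x \<in> D then ereal (\<phi> (f x))
     else Limsup (at x within D) (\<lambda>y. ereal (\<phi> (f y))))"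

definition push_od :: "'a::topological_space set \<Rightarrow> 'a set \<Rightarrow> ('a \<Rightarrow> 'a) \<Rightarrow>
    (('a \<Rightarrow> real) \<Rightarrow> real) \<Rightarrow> (('a \<Rightarrow> real) \<Rightarrow> real)" where
  "push_od X D f \<mu> = (\<lambda>\<phi>. Inf {\<mu> \<psi> | \<psi>. continuous_on X \<psi> \<and>
       (\<forall>x\<in>X. ereal (\<psi> x) \<ge> ext_comp D f \<phi> x)})"

definition Omega_inf :: "'a set \<Rightarrow> ('a \<Rightarrow> 'a) \<Rightarrow> 'a set" where
  "Omega_inf D f = {x \<in> D. \<forall>n. (f ^^ n) x \<in> D}"

definition good_wrt_iterates :: "'a::topological_space set \<Rightarrow> 'a set \<Rightarrow> ('a \<Rightarrow> 'a) \<Rightarrow> bool" where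
  "good_wrt_iterates X D f \<longleftrightarrow> X \<subseteq> closure (Omega_inf D f) \<and>
     (top_of_set X) interior_of ((top_of_set X) closure_of (X - Omega_inf D f)) = {}"

definition Gamma_inf :: "'a::topological_space set \<Rightarrow> ('a \<Rightarrow> 'a) \<Rightarrow> (nat \<Rightarrow> 'a) set" where
  "Gamma_inf D f = closure ((\<lambda>x. \<lambda>n. (f ^^ n) x) ` Omega_inf D f)"

definition shift :: "(nat \<Rightarrow> 'a) \<Rightarrow> (nat \<Rightarrow> 'a)" where
  "shift s = (\<lambda>n. s (Suc n))"

definition proj1 :: "(nat \<Rightarrow> 'a) \<Rightarrow> 'a" where
  "proj1 s = s 0"

end

theory Submission
  imports Defs
begin

text \<open>Every point of \<Gamma>_{f,\<infinity>} is a limit of orbits (x, f x, f^2 x, ...) with x \<in> \<Omega>_{f,\<infinity>}.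
  Any continuous majorant \<psi> of E(\<phi> \<circ> f) satisfies \<phi>(f x) \<le> \<psi>(x) along such orbits,
  hence \<phi>(s 1) \<le> \<psi>(s 0) on all of \<Gamma>_{f,\<infinity>} by continuity. Monotonicity of \<mu> then gives
  ((\<pi>_1)_*(\<sigma>_f)_*\<mu>)(\<phi>) \<le> ((\<pi>_1)_*\<mu>)(\<psi>), and taking the infimum over \<psi> proves the claim.
  Compactness only serves to make the set of majorants nonempty.\<close>

lemma positive_strong_submeasure_mono:
  assumes "positive_strong_submeasure W \<mu>"
    and "continuous_on W \<phi>" "continuous_on W \<psi>" "\<And>x. x \<in> W \<Longrightarrow> \<phi> x \<le> \<psi> x"
  shows "\<mu> \<phi> \<le> \<mu> \<psi>"
  using assms unfolding positive_strong_submeasure_def by blast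

lemma orbit_in_dom:
  assumes "x \<in> Omega_inf D f"
  shows "(f ^^ n) x \<in> D"
  using assms unfolding Omega_inf_def by (cases n) (auto simp del: funpow.simps)

lemma Gamma_inf_coordinate_in:
  assumes "closed X" "D \<subseteq> X" "s \<in> Gamma_inf D f"
  shows "s n \<in> X"
proof -
  have "(\<lambda>s. s n) ` Gamma_inf D f \<subseteq> X"
    unfolding Gamma_inf_def
  proof (rule image_closure_subset[OF _ \<open>closed X\<close>])
    show "continuous_on (closure ((\<lambda>x n. (f ^^ n) x) ` Omega_inf D f)) (\<lambda>s. s n)"
      by (rule continuous_on_subset[OF continuous_on_product_coordinates]) simp
    show "(\<lambda>s. s n) ` (\<lambda>x n. (f ^^ n) x) ` Omega_inf D f \<subseteq> X"
      using orbit_in_dom \<open>D \<subseteq> X\<close> by fastforce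
  qed
  then show ?thesis
    using \<open>s \<in> Gamma_inf D f\<close> by blast
qed

lemma continuous_on_Gamma_inf_coordinate:
  assumes "closed X" "D \<subseteq> X" "continuous_on X g"
  shows "continuous_on (Gamma_inf D f) (\<lambda>s. g (s n))"
proof (rule continuous_on_compose2[OF \<open>continuous_on X g\<close>])
  show "continuous_on (Gamma_inf D f) (\<lambda>s. s n)"
    by (rule continuous_on_subset[OF continuous_on_product_coordinates]) simp
  show "(\<lambda>s. s n) ` Gamma_inf D f \<subseteq> X"
    using Gamma_inf_coordinate_in[OF assms(1,2)] by blast
qed

lemma ext_comp_le_bound:
  assumes "\<And>y. y \<in> D \<Longrightarrow> \<phi> (f y) \<le> B"
  shows "ext_comp D f \<phi> x \<le> ereal B"
proof (cases "x \<in> D")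
  case True
  then show ?thesis
    using assms by (simp add: ext_comp_def)
next
  case False
  have "Limsup (at x within D) (\<lambda>y. ereal (\<phi> (f y))) \<le> ereal B"
    by (rule Limsup_bounded) (auto simp: eventually_at_filter assms)
  then show ?thesis
    using False by (simp add: ext_comp_def)
qed

lemma ext_comp_has_continuous_majorant:
  assumes "compact X" "continuous_on X \<phi>" "f ` D \<subseteq> X"
  shows "\<exists>\<psi>. continuous_on X \<psi> \<and> (\<forall>x\<in>X. ext_comp D f \<phi> x \<le> ereal (\<psi> x))"
proof -
  obtain B where "\<And>x. x \<in> X \<Longrightarrow> \<bar>\<phi> x\<bar> \<le> B"
    using compact_imp_bounded[OF compact_continuous_image[OF assms(2,1)]]
    unfolding bounded_iff by auto
  then have "\<And>y. y \<in> D \<Longrightarrow> \<phi> (f y) \<le> B"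
    using assms(3) abs_le_D1 by blast
  then show ?thesis
    using ext_comp_le_bound[of D \<phi> f B] by (intro exI[of _ "\<lambda>_. B"]) auto
qed

lemma push_od_greatest:
  assumes "\<exists>\<psi>. continuous_on X \<psi> \<and> (\<forall>x\<in>X. ext_comp D f \<phi> x \<le> ereal (\<psi> x))"
    and "\<And>\<psi>. continuous_on X \<psi> \<Longrightarrow> (\<forall>x\<in>X. ext_comp D f \<phi> x \<le> ereal (\<psi> x)) \<Longrightarrow> c \<le> \<mu> \<psi>"
  shows "c \<le> push_od X D f \<mu> \<phi>"
  unfolding push_od_def using assms by (intro cInf_greatest) auto

lemma Gamma_inf_majorant_shift:
  fixes \<phi> \<psi> :: "'a::metric_space \<Rightarrow> real"
  assumes "closed X" "D \<subseteq> X" "continuous_on X \<phi>" "continuous_on X \<psi>"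
    and majorant: "\<And>x. x \<in> D \<Longrightarrow> \<phi> (f x) \<le> \<psi> x"
    and "s \<in> Gamma_inf D f"
  shows "\<phi> (s 1) \<le> \<psi> (s 0)"
proof -
  have "continuous_on (Gamma_inf D f) (\<lambda>s. \<psi> (s 0) - \<phi> (s 1))"
    using continuous_on_Gamma_inf_coordinate[OF assms(1,2) assms(4), of f 0]
      continuous_on_Gamma_inf_coordinate[OF assms(1,2) assms(3), of f 1]
    by (intro continuous_intros)
  then have "0 \<le> \<psi> (s 0) - \<phi> (s 1)"
    unfolding Gamma_inf_def
  proof (rule continuous_ge_on_closure)
    show "s \<in> closure ((\<lambda>x n. (f ^^ n) x) ` Omega_inf D f)"
      using \<open>s \<in> Gamma_inf D f\<close> by (simp add: Gamma_inf_def)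
    show "0 \<le> \<psi> (t 0) - \<phi> (t 1)" if "t \<in> (\<lambda>x n. (f ^^ n) x) ` Omega_inf D f" for t
      using that orbit_in_dom[of _ D f 0] majorant by auto
  qed
  then show ?thesis
    by simp
qed

theorem proposition3p1:
  fixes X D :: "'a::metric_space set" and f :: "'a \<Rightarrow> 'a"
    and \<mu> :: "((nat \<Rightarrow> 'a) \<Rightarrow> real) \<Rightarrow> real"
  assumes "compact X"
    and "open_dense_map X D f"
    and "good_wrt_iterates X D f"
    and "positive_strong_submeasure (Gamma_inf D f) \<mu>"
  shows "\<forall>\<phi>. continuous_on X \<phi> \<longrightarrow>
           push_od X D f (push_cont proj1 \<mu>) \<phi> \<ge> push_cont proj1 (push_cont shift \<mu>) \<phi>"
proof (intro allI impI)
  fix \<phi> :: "'a \<Rightarrow> real"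
  assume \<phi>: "continuous_on X \<phi>"
  have "D \<subseteq> X" "f ` D \<subseteq> X"
    using assms(2) by (auto simp: open_dense_map_def)
  have "closed X"
    using \<open>compact X\<close> by (rule compact_imp_closed)
  show "push_cont proj1 (push_cont shift \<mu>) \<phi> \<le> push_od X D f (push_cont proj1 \<mu>) \<phi>"
  proof (rule push_od_greatest)
    show "\<exists>\<psi>. continuous_on X \<psi> \<and> (\<forall>x\<in>X. ext_comp D f \<phi> x \<le> ereal (\<psi> x))"
      using ext_comp_has_continuous_majorant[OF \<open>compact X\<close> \<phi> \<open>f ` D \<subseteq> X\<close>] .
    fix \<psi> assume \<psi>: "continuous_on X \<psi>" and "\<forall>x\<in>X. ext_comp D f \<phi> x \<le> ereal (\<psi> x)"
    then have "\<phi> (f x) \<le> \<psi> x" if "x \<in> D" for x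
      using that \<open>D \<subseteq> X\<close> by (force simp: ext_comp_def)
    then have "\<mu> (\<lambda>s. \<phi> (s 1)) \<le> \<mu> (\<lambda>s. \<psi> (s 0))"
      using positive_strong_submeasure_mono[OF assms(4)]
        continuous_on_Gamma_inf_coordinate[OF \<open>closed X\<close> \<open>D \<subseteq> X\<close>] \<phi> \<psi>
        Gamma_inf_majorant_shift[OF \<open>closed X\<close> \<open>D \<subseteq> X\<close> \<phi> \<psi>]
      by blast
    then show "push_cont proj1 (push_cont shift \<mu>) \<phi> \<le> push_cont proj1 \<mu> \<psi>"
      by (simp add: push_cont_def proj1_def shift_def o_def)
  qed
qed

end
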